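(* There are exactly $240$ special Sudoku grids over $\mathbb{Z}_5$. Moreover, there is a special Sudoku grid $S_0$ over $\mathbb{Z}_5$ such that every special Sudoku grid over $\mathbb{Z}_5$ is equivalent to $S_0$ up to relabeling and reflection, i.e. it is obtained from $S_0$ or from $s(S_0)$ by a relabeling of symbols.
   Context: Work in $\mathbb{Z}_5^2$ with Lee distance $d_L(\mathbf{u},\mathbf{v})=\sum_i\min\{w_i,5-w_i\}$, $\mathbf{w}=\mathbf{u}-\mathbf{v}$. A $(2,5,3)$ perfect code over $\mathbb{Z}_5$ is a set $\mathcal{C}=\{\mathbf{c}_1,\dots,\mathbf{c}_5\}\subseteq\mathbb{Z}_5^2$ with minimum Lee distance $3$ (so the Lee balls of radius $1$, each of size $5$, around the codewords partition $\mathbb{Z}_5^2$). Its palette grid $\mathcal{I}_\mathcal{C}$ is the $5\times5$ array (rows/columns indexed by $\mathbb{Z}_5$) with entry $i$ at every position in the radius-1 ball around $\mathbf{c}_i$. A perfect Sudoku grid with respect to $\mathcal{C}$ is a Latin square of order $5$ on $\{1,\dots,5\}$ orthogonal to $\mathcal{I}_\mathcal{C}$ (all $25$ ordered pairs of corresponding entries distinct). A special Sudoku grid over $\mathbb{Z}_5$ is a $5\times5$ array that is a perfect Sudoku grid with respect to every $(2,5,3)$ perfect code over $\mathbb{Z}_5$. Relabeling applies a bijection of $\{1,\dots,5\}$ to all entries; the reflection is $(s(A))_{i,j}=A_{i,4-j}$. *)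

theory Defs
  imports Main "HOL-Library.Numeral_Type"
begin

text \<open>The ring Z_5 is the numeral type 5 (arithmetic mod 5).
  Points of Z_5^2 are pairs; a 5x5 grid has rows/columns indexed by Z_5 and
  entries (symbols) in nat, meant to lie in {1..5}.\<close>

type_synonym grid = "5 \<Rightarrow> 5 \<Rightarrow> nat"

definition val5 :: "5 \<Rightarrow> nat" where
  "val5 w = nat (Rep_bit1 w)"   \<comment> \<open>canonical representative in {0..4}\<close>

definition lee_wt :: "5 \<Rightarrow> nat" where
  "lee_wt w = min (val5 w) (5 - val5 w)"

definition lee_dist :: "5 \<times> 5 \<Rightarrow> 5 \<times> 5 \<Rightarrow> nat" where
  "lee_dist u v = lee_wt (fst u - fst v) + lee_wt (snd u - snd v)"

text \<open>A (2,5,3) perfect code, given as its list of codewords c_1..c_5 (function on {1..5}).\<close>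
definition perfect_code :: "(nat \<Rightarrow> 5 \<times> 5) \<Rightarrow> bool" where
  "perfect_code c \<longleftrightarrow>
     (\<forall>i\<in>{1..5}. \<forall>j\<in>{1..5}. i \<noteq> j \<longrightarrow> lee_dist (c i) (c j) \<ge> 3) \<and>
     (\<exists>i\<in>{1..5}. \<exists>j\<in>{1..5}. i \<noteq> j \<and> lee_dist (c i) (c j) = 3)"

definition palette :: "(nat \<Rightarrow> 5 \<times> 5) \<Rightarrow> grid" where
  "palette c x y = (THE i. i \<in> {1..5} \<and> lee_dist (x, y) (c i) \<le> 1)"

definition latin_square :: "grid \<Rightarrow> bool" where
  "latin_square A \<longleftrightarrow>
     (\<forall>i. bij_betw (\<lambda>j. A i j) UNIV {1..5}) \<and>
     (\<forall>j. bij_betw (\<lambda>i. A i j) UNIV {1..5})"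

definition orthogonal :: "grid \<Rightarrow> grid \<Rightarrow> bool" where
  "orthogonal A B \<longleftrightarrow> inj (\<lambda>(i, j). (A i j, B i j))"

definition perfect_sudoku :: "(nat \<Rightarrow> 5 \<times> 5) \<Rightarrow> grid \<Rightarrow> bool" where
  "perfect_sudoku c A \<longleftrightarrow> latin_square A \<and> orthogonal A (palette c)"

definition special_sudoku :: "grid \<Rightarrow> bool" where
  "special_sudoku A \<longleftrightarrow> (\<forall>c. perfect_code c \<longrightarrow> perfect_sudoku c A)"

definition relabel :: "(nat \<Rightarrow> nat) \<Rightarrow> grid \<Rightarrow> grid" where
  "relabel \<sigma> A = (\<lambda>i j. \<sigma> (A i j))"

definition reflect :: "grid \<Rightarrow> grid" where
  "reflect A = (\<lambda>i j. A i (4 - j))"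

end

theory Submission
  imports Defs "HOL-Combinatorics.Permutations"
begin

text \<open>
  The codewords \<open>q + i (1, 2)\<close> form a perfect code, and the ball around \<open>(x + 1, y)\<close>
  contains \<open>(x, y)\<close>, \<open>(x + 1, y + 1)\<close> and \<open>(x + 1, y - 1)\<close>; so in a special grid
  diagonally adjacent cells carry different symbols. In a Latin square with this property each
  symbol moves 2 or 3 columns from one row to the next. The five steps around the cyclic rows
  add up to \<open>0 mod 5\<close>, which forces a constant step, and lines of different slopes meet,
  so all symbols lie on parallel lines: \<open>A x y = g (y - s x)\<close> with \<open>s \<in> {2, 3}\<close> and
  \<open>g\<close> bijective. Conversely every such grid is special, because \<open>y - s x\<close> takes five
  distinct values on every Lee ball. That gives \<open>2 \<cdot> 5! = 240\<close> grids, and the reflection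
  exchanges the slopes 2 and 3.
\<close>

lemma Z5_cases: "(x::5) = 0 \<or> x = 1 \<or> x = 2 \<or> x = 3 \<or> x = 4"
proof (cases x)
  case (of_int z)
  then have "z = 0 \<or> z = 1 \<or> z = 2 \<or> z = 3 \<or> z = 4" by auto
  then show ?thesis using of_int by auto
qed

lemma val5_0: "val5 0 = 0" and val5_1: "val5 1 = 1" and val5_minus_1: "val5 (- 1) = 4"
  by (simp_all add: val5_def bit1.Rep_0 bit1.Rep_1 bit1.minus_def bit1.Abs_bit1_inverse)

lemma val5_numeral: "val5 (numeral n) = nat (numeral n mod 5)"
  by (simp add: val5_def bit1.Rep_numeral)

lemma val5_neg_numeral: "val5 (- numeral n) = nat (- numeral n mod 5)"
proof -
  have "Rep_bit1 (- numeral n :: 5) = (- (numeral n mod 5)) mod 5"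
    unfolding bit1.minus_def bit1.Rep_numeral by (subst bit1.Abs_bit1_inverse) simp_all
  then show ?thesis unfolding val5_def by (simp only: mod_minus_eq)
qed

lemmas lee_wt_eval = lee_wt_def val5_0 val5_1 val5_minus_1 val5_numeral val5_neg_numeral

lemma lee_wt_add_le: "lee_wt (a + b) \<le> lee_wt a + lee_wt b"
  using Z5_cases[of a] Z5_cases[of b] by (auto simp: lee_wt_eval)

lemma lee_wt_minus_commute: "lee_wt (a - b) = lee_wt (b - a)"
  using Z5_cases[of a] Z5_cases[of b] by (auto simp: lee_wt_eval)

lemma lee_dist_commute: "lee_dist u v = lee_dist v u"
  unfolding lee_dist_def by (simp add: lee_wt_minus_commute)

lemma lee_dist_triangle: "lee_dist u w \<le> lee_dist u v + lee_dist v w"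
  using lee_wt_add_le[of "fst u - fst v" "fst v - fst w"] lee_wt_add_le[of "snd u - snd v" "snd v - snd w"]
  unfolding lee_dist_def by simp

definition lee_ball :: "5 \<times> 5 \<Rightarrow> (5 \<times> 5) set" where
  "lee_ball q = {p. lee_dist p q \<le> 1}"

lemma lee_ball_eq: "lee_ball (a, b) = {(a, b), (a + 1, b), (a - 1, b), (a, b + 1), (a, b - 1)}"
proof (rule set_eqI)
  fix p :: "5 \<times> 5"
  obtain x y where p: "p = (x, y)" by fastforce
  show "p \<in> lee_ball (a, b) \<longleftrightarrow> p \<in> {(a, b), (a + 1, b), (a - 1, b), (a, b + 1), (a, b - 1)}"
    using Z5_cases[of "x - a"] Z5_cases[of "y - b"]
    by (auto simp: p lee_ball_def lee_dist_def lee_wt_eval diff_eq_eq add.commute)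
qed

lemma card_lee_ball: "card (lee_ball q) = 5"
  by (cases q) (simp add: lee_ball_eq)

lemma perfect_code_balls_disjoint:
  assumes "perfect_code c" "i \<in> {1..5}" "j \<in> {1..5}" "p \<in> lee_ball (c i)" "p \<in> lee_ball (c j)"
  shows "i = j"
proof (rule ccontr)
  assume "i \<noteq> j"
  then have "3 \<le> lee_dist (c i) (c j)" using assms(1-3) unfolding perfect_code_def by blast
  moreover have "lee_dist (c i) (c j) \<le> lee_dist p (c i) + lee_dist p (c j)"
    using lee_dist_triangle[of "c i" "c j" p] lee_dist_commute[of p "c i"] by simp
  ultimately show False using assms(4,5) unfolding lee_ball_def by simp
qed

lemma perfect_code_balls_cover:
  assumes "perfect_code c"
  shows "(\<Union>i\<in>{1..5}. lee_ball (c i)) = UNIV"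
proof -
  have "card (\<Union>i\<in>{1..5}. lee_ball (c i)) = (\<Sum>i\<in>{1..5::nat}. card (lee_ball (c i)))"
    using perfect_code_balls_disjoint[OF assms] by (intro card_UN_disjoint) auto
  also have "\<dots> = card (UNIV :: (5 \<times> 5) set)"
    by (simp add: card_lee_ball flip: UNIV_Times_UNIV)
  finally show ?thesis by (simp add: card_subset_eq)
qed

lemma palette_eq_iff:
  assumes "perfect_code c"
  shows "palette c x y = k \<longleftrightarrow> k \<in> {1..5} \<and> (x, y) \<in> lee_ball (c k)"
proof -
  have unique: "\<exists>!i. i \<in> {1..5} \<and> lee_dist (x, y) (c i) \<le> 1"
    using perfect_code_balls_cover[OF assms] perfect_code_balls_disjoint[OF assms]
    unfolding lee_ball_def by blast
  have "palette c x y \<in> {1..5} \<and> lee_dist (x, y) (c (palette c x y)) \<le> 1"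
    unfolding palette_def by (rule theI'[OF unique])
  with unique show ?thesis unfolding lee_ball_def by blast
qed

lemma orthogonal_palette_iff:
  assumes "perfect_code c"
  shows "orthogonal A (palette c) \<longleftrightarrow> (\<forall>i\<in>{1..5}. inj_on (case_prod A) (lee_ball (c i)))"
proof
  assume orth: "orthogonal A (palette c)"
  show "\<forall>i\<in>{1..5}. inj_on (case_prod A) (lee_ball (c i))"
  proof (intro ballI inj_onI)
    fix i and p q :: "5 \<times> 5"
    obtain x y x' y' where pq: "p = (x, y)" "q = (x', y')" by fastforce
    assume "i \<in> {1..5}" "p \<in> lee_ball (c i)" "q \<in> lee_ball (c i)" "case_prod A p = case_prod A q"
    then have "A x y = A x' y'" "palette c x y = i" "palette c x' y' = i"
      using palette_eq_iff[OF assms, of x y i] palette_eq_iff[OF assms, of x' y' i] by (simp_all add: pq)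
    then show "p = q"
      using injD[OF orth[unfolded orthogonal_def], of "(x, y)" "(x', y')"] by (simp add: pq)
  qed
next
  assume balls: "\<forall>i\<in>{1..5}. inj_on (case_prod A) (lee_ball (c i))"
  show "orthogonal A (palette c)"
    unfolding orthogonal_def
  proof (rule injI)
    fix p q :: "5 \<times> 5"
    obtain x y x' y' where pq: "p = (x, y)" "q = (x', y')" by fastforce
    assume "(case p of (x, y) \<Rightarrow> (A x y, palette c x y)) = (case q of (x, y) \<Rightarrow> (A x y, palette c x y))"
    then have eq: "A x y = A x' y'" "palette c x y = palette c x' y'" by (simp_all add: pq)
    define i where "i = palette c x y"
    have i: "i \<in> {1..5}" and in_ball: "p \<in> lee_ball (c i)" "q \<in> lee_ball (c i)"
      using palette_eq_iff[OF assms, of x y i] palette_eq_iff[OF assms, of x' y' i] eq(2)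
      by (simp_all add: i_def pq)
    have "inj_on (case_prod A) (lee_ball (c i))" using balls i by blast
    moreover have "case_prod A p = case_prod A q" using eq(1) by (simp add: pq)
    ultimately show "p = q" using in_ball by (rule inj_onD)
  qed
qed

definition diagonal_code :: "5 \<times> 5 \<Rightarrow> nat \<Rightarrow> 5 \<times> 5" where
  "diagonal_code q i = (fst q + of_nat i, snd q + 2 * of_nat i)"

lemma perfect_code_diagonal_code: "perfect_code (diagonal_code q)"
proof -
  have dist: "lee_dist (diagonal_code q i) (diagonal_code q j)
      = lee_wt (of_nat i - of_nat j) + lee_wt (2 * of_nat i - 2 * of_nat j)" for i j
    by (simp add: diagonal_code_def lee_dist_def)
  have codewords: "{1..5::nat} = {1, 2, 3, 4, 5}" by auto
  show ?thesis
    unfolding perfect_code_def dist codewords by (simp add: lee_wt_eval)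
qed

lemma diagonal_code_5: "diagonal_code q 5 = q"
proof -
  have zero: "(5 :: 5) = 0" "(10 :: 5) = 0" by simp_all
  show ?thesis by (simp add: diagonal_code_def zero)
qed

definition diagonally_distinct :: "grid \<Rightarrow> bool" where
  "diagonally_distinct A \<longleftrightarrow> (\<forall>x y. A x y \<noteq> A (x + 1) (y + 1) \<and> A x y \<noteq> A (x + 1) (y - 1))"

lemma special_sudoku_latin_square: "special_sudoku A \<Longrightarrow> latin_square A"
  using perfect_code_diagonal_code unfolding special_sudoku_def perfect_sudoku_def by blast

lemma special_sudoku_diagonally_distinct:
  assumes "special_sudoku A"
  shows "diagonally_distinct A"
  unfolding diagonally_distinct_def
proof (intro allI conjI)
  fix x y :: 5
  let ?c = "diagonal_code (x + 1, y)"
  have "orthogonal A (palette ?c)"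
    using assms perfect_code_diagonal_code unfolding special_sudoku_def perfect_sudoku_def by blast
  then have "inj_on (case_prod A) (lee_ball (?c 5))"
    using orthogonal_palette_iff[OF perfect_code_diagonal_code] by simp
  then have "inj_on (case_prod A) (lee_ball (x + 1, y))"
    by (simp only: diagonal_code_5)
  moreover have "(x, y) \<in> lee_ball (x + 1, y)" "(x + 1, y + 1) \<in> lee_ball (x + 1, y)"
    "(x + 1, y - 1) \<in> lee_ball (x + 1, y)"
    by (simp_all add: lee_ball_eq)
  ultimately show "A x y \<noteq> A (x + 1) (y + 1)" "A x y \<noteq> A (x + 1) (y - 1)"
    using inj_onD[where f = "case_prod A" and x = "(x, y)"] by fastforce+
qed

lemma latin_square_row: "latin_square A \<Longrightarrow> bij_betw (A x) UNIV {1..5}"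
  unfolding latin_square_def by blast

lemma latin_square_column: "latin_square A \<Longrightarrow> bij_betw (\<lambda>x. A x y) UNIV {1..5}"
  unfolding latin_square_def by blast

lemma latin_square_symbol_graph:
  assumes "latin_square A" "k \<in> {1..5}"
  obtains f where "\<forall>x y. A x y = k \<longleftrightarrow> y = f x"
proof
  show "\<forall>x y. A x y = k \<longleftrightarrow> y = inv (A x) k"
  proof (intro allI)
    fix x y
    have "bij_betw (A x) UNIV {1..5}" using assms(1) by (rule latin_square_row)
    then show "A x y = k \<longleftrightarrow> y = inv (A x) k"
      using assms(2) bij_betw_inv_into_right[of "A x" UNIV "{1..5}" k] inv_into_f_f[of "A x" UNIV y]
      unfolding bij_betw_def by auto
  qed
qed

lemma diagonally_distinct_symbol_step:
  assumes "latin_square A" "diagonally_distinct A" and graph: "\<forall>x y. A x y = k \<longleftrightarrow> y = f x"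
  shows "f (x + 1) - f x \<in> {2, 3}"
proof -
  define d where "d = f (x + 1) - f x"
  have k: "A x (f x) = k" "A (x + 1) (f x + d) = k" using graph by (simp_all add: d_def)
  have "A (x + 1) (f x) \<noteq> A x (f x)"
    using latin_square_column[OF assms(1), of "f x"] unfolding bij_betw_def inj_def by fastforce
  then have "d \<noteq> 0" using k by auto
  moreover have "d \<noteq> 1" "d \<noteq> - 1"
    using assms(2) k unfolding diagonally_distinct_def by (metis diff_conv_add_uminus)+
  ultimately have "d = 2 \<or> d = 3" using Z5_cases[of d] by auto
  then show ?thesis by (simp add: d_def)
qed

text \<open>Mixing \<open>m\<close> steps 3 with \<open>5 - m\<close> steps 2 gives the sum \<open>10 + m\<close>, which is \<open>0 mod 5\<close>
  only for \<open>m = 0\<close> or \<open>m = 5\<close>.\<close>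
lemma Z5_five_steps_equal:
  fixes d0 d1 d2 d3 d4 :: 5
  assumes "d0 \<in> {2, 3}" "d1 \<in> {2, 3}" "d2 \<in> {2, 3}" "d3 \<in> {2, 3}" "d4 \<in> {2, 3}"
    and "d0 + d1 + d2 + d3 + d4 = 0"
  shows "d1 = d0 \<and> d2 = d0 \<and> d3 = d0"
  using assms by (simp only: insert_iff empty_iff simp_thms) (elim disjE; simp)

lemma Z5_steps_constant:
  fixes f :: "5 \<Rightarrow> 5"
  assumes steps: "\<forall>x. f (x + 1) - f x \<in> {2, 3}"
  shows "\<exists>s\<in>{2, 3}. \<forall>x. f x = f 0 + s * x"
proof -
  have wrap: "(4 :: 5) + 1 = 0" by simp
  have d: "f 1 - f 0 \<in> {2, 3}" "f 2 - f 1 \<in> {2, 3}" "f 3 - f 2 \<in> {2, 3}" "f 4 - f 3 \<in> {2, 3}"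
    "f 0 - f 4 \<in> {2, 3}"
    using steps[rule_format, of 0] steps[rule_format, of 1] steps[rule_format, of 2]
      steps[rule_format, of 3] steps[rule_format, of 4]
    by (simp_all only: wrap) simp_all
  define s where "s = f 1 - f 0"
  have "f 2 - f 1 = s \<and> f 3 - f 2 = s \<and> f 4 - f 3 = s"
    unfolding s_def using d by (rule Z5_five_steps_equal) simp
  then have "f 1 = f 0 + s" "f 2 = f 0 + s + s" "f 3 = f 0 + s + s + s" "f 4 = f 0 + s + s + s + s"
    by (simp_all add: s_def diff_eq_eq add.commute)
  moreover have "s \<in> {2, 3}" using d(1) by (simp add: s_def)
  ultimately have "f x = f 0 + s * x" for x
    using Z5_cases[of x] by (auto simp: add.assoc)
  with \<open>s \<in> {2, 3}\<close> show ?thesis by blast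
qed

lemma diagonally_distinct_symbol_line:
  assumes "latin_square A" "diagonally_distinct A" "k \<in> {1..5}"
  obtains s c where "s \<in> {2, 3}" "\<forall>x y. A x y = k \<longleftrightarrow> y = c + s * x"
proof -
  obtain f where graph: "\<forall>x y. A x y = k \<longleftrightarrow> y = f x"
    using latin_square_symbol_graph[OF assms(1,3)] .
  obtain s where "s \<in> {2, 3}" "\<forall>x. f x = f 0 + s * x"
    using Z5_steps_constant diagonally_distinct_symbol_step[OF assms(1,2) graph] by blast
  with graph show ?thesis using that by metis
qed

lemma symbol_lines_same_slope:
  fixes s t c d :: 5
  assumes k: "\<forall>x y. A x y = k \<longleftrightarrow> y = c + s * x" and l: "\<forall>x y. A x y = l \<longleftrightarrow> y = d + t * x"
    and "s \<in> {2, 3}" "t \<in> {2, 3}"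
  shows "s = t"
proof (rule ccontr)
  assume "s \<noteq> t"
  then have slopes: "(s = 2 \<and> t = 3) \<or> (s = 3 \<and> t = 2)" using assms(3,4) by auto
  define x where "x = (s - t) * (d - c)" \<comment> \<open>\<open>s - t = \<plusminus>1\<close> is its own inverse\<close>
  from slopes have "c + s * x = d + t * x"
    unfolding x_def by (elim disjE) (simp_all add: algebra_simps)
  then have "k = l"
    using k[rule_format, of x "c + s * x"] l[rule_format, of x "c + s * x"] by simp
  have "c + s * z = d + t * z" for z
    using k[rule_format, of z "c + s * z"] l[rule_format, of z "c + s * z"] \<open>k = l\<close> by simp
  from this[of 0] this[of 1] have "s = t" by simp
  with \<open>s \<noteq> t\<close> show False ..
qed

definition linear_grid :: "(5 \<Rightarrow> nat) \<Rightarrow> 5 \<Rightarrow> grid" where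
  "linear_grid g s = (\<lambda>x y. g (y - s * x))"

lemma diagonally_distinct_latin_square_linear:
  assumes "latin_square A" "diagonally_distinct A"
  obtains s where "s \<in> {2, 3}" "A = linear_grid (A 0) s"
proof -
  have symbol: "A x y \<in> {1..5}" for x y
    using latin_square_row[OF assms(1)] by (rule bij_betw_apply) simp
  obtain s c where s: "s \<in> {2, 3}" and line: "\<forall>x y. A x y = A 0 0 \<longleftrightarrow> y = c + s * x"
    using diagonally_distinct_symbol_line[OF assms symbol] .
  have "A x y = A 0 (y - s * x)" for x y
  proof -
    obtain t d where t: "t \<in> {2, 3}" and line': "\<forall>x' y'. A x' y' = A x y \<longleftrightarrow> y' = d + t * x'"
      using diagonally_distinct_symbol_line[OF assms symbol] .
    have "t = s" using symbol_lines_same_slope[OF line' line t s] .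
    have "y = d + s * x" using line'[rule_format, of x y] \<open>t = s\<close> by simp
    moreover have "A 0 d = A x y" using line' by simp
    ultimately show ?thesis by simp
  qed
  then have "A = linear_grid (A 0) s" unfolding linear_grid_def by (intro ext) simp
  with s that show ?thesis by blast
qed

lemma bij_Z5_affine:
  fixes s y :: 5
  assumes "s \<in> {2, 3}"
  shows "bij (\<lambda>x. y - s * x)"
proof (rule bij_betwI[where g = "\<lambda>z. - s * (y - z)"])
  have square: "s * s = - 1" using assms by auto
  show "- s * (y - (y - s * x)) = x" for x
    by (simp add: mult.assoc[symmetric] square)
  show "y - s * (- s * (y - z)) = z" for z
    by (simp add: mult.assoc[symmetric] square)
qed auto

lemma linear_grid_latin_square:
  assumes g: "bij_betw g UNIV {1..5}" and s: "s \<in> {2, 3}"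
  shows "latin_square (linear_grid g s)"
  unfolding latin_square_def linear_grid_def
proof (intro allI conjI)
  fix x
  show "bij_betw (\<lambda>y. g (y - s * x)) UNIV {1..5}"
    using bij_betw_trans[OF bij_diff_right g] by (simp add: comp_def)
next
  fix y
  show "bij_betw (\<lambda>x. g (y - s * x)) UNIV {1..5}"
    using bij_betw_trans[OF bij_Z5_affine[OF s] g] by (simp add: comp_def)
qed

text \<open>The values \<open>y - s x\<close> on a Lee ball around \<open>(a, b)\<close> are \<open>b - s a\<close> shifted by
  \<open>0, -s, s, 1, -1\<close>, which are distinct for \<open>s \<in> {2, 3}\<close>.\<close>
lemma lee_ball_inj_on_line_coordinate:
  fixes s :: 5
  assumes "s \<in> {2, 3}"
  shows "inj_on (\<lambda>(x, y). y - s * x) (lee_ball q)"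
  using assms by (cases q) (auto simp: lee_ball_eq algebra_simps)

lemma linear_grid_special_sudoku:
  assumes g: "bij_betw g UNIV {1..5}" and s: "s \<in> {2, 3}"
  shows "special_sudoku (linear_grid g s)"
  unfolding special_sudoku_def perfect_sudoku_def
proof (intro allI impI conjI)
  fix c assume c: "perfect_code c"
  show "latin_square (linear_grid g s)" using g s by (rule linear_grid_latin_square)
  have grid: "case_prod (linear_grid g s) = g \<circ> (\<lambda>(x, y). y - s * x)"
    by (auto simp: linear_grid_def)
  have "inj_on (case_prod (linear_grid g s)) (lee_ball q)" for q
    unfolding grid using lee_ball_inj_on_line_coordinate[OF s]
    by (rule comp_inj_on) (meson g bij_betw_def inj_on_subset subset_UNIV)
  then show "orthogonal (linear_grid g s) (palette c)"
    unfolding orthogonal_palette_iff[OF c] by blast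
qed

lemma special_sudoku_iff_linear_grid:
  "special_sudoku A \<longleftrightarrow> (\<exists>g s. bij_betw g UNIV {1..5} \<and> s \<in> {2, 3} \<and> A = linear_grid g s)"
proof
  assume "special_sudoku A"
  then have "latin_square A" "diagonally_distinct A"
    by (simp_all add: special_sudoku_latin_square special_sudoku_diagonally_distinct)
  then show "\<exists>g s. bij_betw g UNIV {1..5} \<and> s \<in> {2, 3} \<and> A = linear_grid g s"
    by (metis diagonally_distinct_latin_square_linear latin_square_row)
qed (auto intro: linear_grid_special_sudoku)

lemma linear_grid_inj:
  "inj_on (\<lambda>(g, s). linear_grid g s) ({g. bij_betw g UNIV {1..5}} \<times> {2, 3})"
proof (rule inj_onI, clarify)
  fix g h :: "5 \<Rightarrow> nat" and s t :: 5
  assume h: "bij_betw h UNIV {1..5}" and st: "s \<in> {2, 3}" "t \<in> {2, 3}"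
    and eq: "linear_grid g s = linear_grid h t"
  have "g y = h y" for y using fun_cong[OF fun_cong[OF eq, of 0], of y] by (simp add: linear_grid_def)
  then have "g = h" ..
  have "h (- s) = h (- t)" using fun_cong[OF fun_cong[OF eq, of 1], of 0] by (simp add: linear_grid_def \<open>g = h\<close>)
  then have "s = t" using h unfolding bij_betw_def by (auto dest: injD)
  with \<open>g = h\<close> show "g = h \<and> s = t" ..
qed

lemma card_bijections_UNIV:
  assumes "card (UNIV :: 'a::finite set) = card B"
  shows "card {g :: 'a \<Rightarrow> 'b. bij_betw g UNIV B} = fact (card B)"
proof -
  have "card B \<noteq> 0" using assms finite_UNIV_card_ge_0[where 'a = 'a] by simp
  then have "finite B" by (meson card.infinite)
  then obtain h :: "'a \<Rightarrow> 'b" where h: "bij_betw h UNIV B"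
    using finite_same_card_bij[OF finite_class.finite_UNIV \<open>finite B\<close> assms] by blast
  have "{g. bij_betw g UNIV B} = (\<lambda>p. h \<circ> p) ` {p. p permutes (UNIV :: 'a set)}"
  proof (intro set_eqI iffI)
    fix g :: "'a \<Rightarrow> 'b" assume "g \<in> {g. bij_betw g UNIV B}"
    then have g: "bij_betw g UNIV B" by simp
    have "bij_betw (inv_into UNIV h \<circ> g) UNIV UNIV"
      using g bij_betw_inv_into[OF h] by (rule bij_betw_trans)
    then have "inv_into UNIV h \<circ> g permutes UNIV" by (rule bij_imp_permutes) simp
    moreover have "g = h \<circ> (inv_into UNIV h \<circ> g)"
      using g h by (auto simp: fun_eq_iff bij_betw_inv_into_right bij_betw_apply)
    ultimately show "g \<in> (\<lambda>p. h \<circ> p) ` {p. p permutes UNIV}"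
      by (intro rev_image_eqI[of "inv_into UNIV h \<circ> g"]) simp_all
  next
    fix g :: "'a \<Rightarrow> 'b" assume "g \<in> (\<lambda>p. h \<circ> p) ` {p. p permutes (UNIV :: 'a set)}"
    then obtain p where "p permutes UNIV" "g = h \<circ> p" by blast
    then show "g \<in> {g. bij_betw g UNIV B}"
      using bij_betw_trans[OF permutes_imp_bij h] by simp
  qed
  moreover have "inj_on (\<lambda>p. h \<circ> p) {p. p permutes (UNIV :: 'a set)}"
  proof (rule inj_onI)
    fix p q :: "'a \<Rightarrow> 'a" assume "h \<circ> p = h \<circ> q"
    moreover have "inj h" using h by (simp add: bij_betw_def)
    ultimately show "p = q" by (simp add: fun_eq_iff inj_eq)
  qed
  ultimately show ?thesis using card_permutations[OF assms finite_class.finite_UNIV] by (simp add: card_image)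
qed

lemma card_special_sudoku: "card {A. special_sudoku A} = 240"
proof -
  let ?G = "{g :: 5 \<Rightarrow> nat. bij_betw g UNIV {1..5}}"
  have "{A. special_sudoku A} = (\<lambda>(g, s). linear_grid g s) ` (?G \<times> {2, 3})"
    using special_sudoku_iff_linear_grid by auto
  then have "card {A. special_sudoku A} = card (?G \<times> {2, 3 :: 5})"
    using card_image[OF linear_grid_inj] by simp
  also have "\<dots> = fact 5 * 2"
    using card_bijections_UNIV[where 'a = 5 and B = "{1..5 :: nat}"] by (simp add: card_cartesian_product)
  finally show ?thesis by (simp add: fact_numeral)
qed

lemma relabel_linear_grid: "relabel \<sigma> (linear_grid g s) = linear_grid (\<sigma> \<circ> g) s"
  by (simp add: relabel_def linear_grid_def)

lemma reflect_linear_grid: "reflect (linear_grid g s) = linear_grid (g \<circ> (\<lambda>z. 4 - z)) (- s)"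
  by (simp add: reflect_def linear_grid_def algebra_simps)

lemma linear_grid_eq_relabel:
  assumes g: "bij_betw g UNIV {1..5}" and h: "bij_betw h UNIV {1..5}"
  shows "\<exists>\<sigma>. bij_betw \<sigma> {1..5} {1..5} \<and> linear_grid g s = relabel \<sigma> (linear_grid h s)"
proof (intro exI conjI)
  show "bij_betw (g \<circ> inv h) {1..5} {1..5}"
    using bij_betw_inv_into[OF h] g by (rule bij_betw_trans)
  have "inv h \<circ> h = id" using h by (simp add: bij_betw_def inv_o_cancel)
  then show "linear_grid g s = relabel (g \<circ> inv h) (linear_grid h s)"
    by (simp add: relabel_linear_grid comp_assoc)
qed

lemma special_sudoku_relabel_or_reflect:
  assumes g0: "bij_betw g0 UNIV {1..5}" and "special_sudoku A"
  shows "\<exists>\<sigma>. bij_betw \<sigma> {1..5} {1..5} \<and>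
    (A = relabel \<sigma> (linear_grid g0 3) \<or> A = relabel \<sigma> (reflect (linear_grid g0 3)))"
proof -
  obtain g s where g: "bij_betw g UNIV {1..5}" and s: "s \<in> {2, 3}" and A: "A = linear_grid g s"
    using assms(2) special_sudoku_iff_linear_grid by blast
  have "(- 3 :: 5) = 2" by simp
  then have "reflect (linear_grid g0 3) = linear_grid (g0 \<circ> (\<lambda>z. 4 - z)) 2"
    by (simp only: reflect_linear_grid)
  moreover have "bij_betw (g0 \<circ> (\<lambda>z. 4 - z)) UNIV {1..5}"
    using bij_diff g0 by (rule bij_betw_trans)
  ultimately show ?thesis
    using s linear_grid_eq_relabel[OF g g0, of 3] linear_grid_eq_relabel[OF g, of "g0 \<circ> (\<lambda>z. 4 - z)" 2]
    unfolding A by auto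
qed

theorem mainTheorem7:
  shows "card {A. special_sudoku A} = 240 \<and>
    (\<exists>S0. special_sudoku S0 \<and>
       (\<forall>A. special_sudoku A \<longrightarrow>
          (\<exists>\<sigma>. bij_betw \<sigma> {1..5} {1..5} \<and>
                (A = relabel \<sigma> S0 \<or> A = relabel \<sigma> (reflect S0)))))"
proof -
  obtain g0 :: "5 \<Rightarrow> nat" where g0: "bij_betw g0 UNIV {1..5}"
    using finite_same_card_bij[of "UNIV :: 5 set" "{1..5 :: nat}"] by auto
  have "special_sudoku (linear_grid g0 3)" using g0 by (rule linear_grid_special_sudoku) simp
  then show ?thesis
    using card_special_sudoku special_sudoku_relabel_or_reflect[OF g0] by blast
qed

end
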